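(* Let $S$ be a string and let $i<j<k$ be positions such that $S[i\mathinner{.\,.}i']$, $S[j\mathinner{.\,.}j']$ and $S[k\mathinner{.\,.}k']$ are runs of $S$ having the same (smallest) period. Then $k>i'$.
   Context: An integer $p>0$ is a period of a string $P$ if $P[t]=P[t+p]$ for all $t\in[0,|P|-p)$; $\mathsf{per}(P)$ is the smallest period of $P$. A fragment $F=S[a\mathinner{.\,.}b]$ of $S$ is a run of $S$ if $\mathsf{per}(F)\leq |F|/2$ and $F$ cannot be extended by one position to the left or to the right within $S$ with its smallest period remaining the same. *)

theory Defs
  imports Main
begin

text \<open>Strings are lists; positions are 0-based; fragments are inclusive.\<close>

definition is_period :: "'a list \<Rightarrow> nat \<Rightarrow> bool" where
  "is_period P p \<longleftrightarrow> p > 0 \<and> (\<forall>t. t + p < length P \<longrightarrow> P ! t = P ! (t + p))"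

definition per :: "'a list \<Rightarrow> nat" where
  "per P = (LEAST p. is_period P p)"

definition frag :: "'a list \<Rightarrow> nat \<Rightarrow> nat \<Rightarrow> 'a list" where
  "frag S a b = take (Suc b - a) (drop a S)"

definition is_run :: "'a list \<Rightarrow> nat \<Rightarrow> nat \<Rightarrow> bool" where
  "is_run S a b \<longleftrightarrow> a \<le> b \<and> b < length S
     \<and> 2 * per (frag S a b) \<le> length (frag S a b)
     \<and> (a = 0 \<or> per (frag S (a - 1) b) \<noteq> per (frag S a b))
     \<and> (Suc b = length S \<or> per (frag S a (Suc b)) \<noteq> per (frag S a b))"

end

theory Submission
  imports Defs
begin

text \<open>A run cannot be extended to the left with its period, so no fragment starting strictly
  before a run S[c..d] can have period per(S[c..d]) while covering S[c-1..c-1+per]. If k \<le> i',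
  then either S[j..j'] overlaps S[i..i'] by at least one period, or, since S[j..j'] has length
  at least two periods, S[k..k'] overlaps S[j..j'] by at least one period.\<close>

lemma length_frag: "b < length S \<Longrightarrow> length (frag S a b) = Suc b - a"
  by (simp add: frag_def)

lemma nth_frag: "b < length S \<Longrightarrow> t < Suc b - a \<Longrightarrow> frag S a b ! t = S ! (a + t)"
  by (simp add: frag_def)

lemma is_period_frag_iff:
  assumes "b < length S"
  shows "is_period (frag S a b) p \<longleftrightarrow>
           p > 0 \<and> (\<forall>t. a \<le> t \<and> t + p \<le> b \<longrightarrow> S ! t = S ! (t + p))"
proof
  assume per: "is_period (frag S a b) p"
  show "p > 0 \<and> (\<forall>t. a \<le> t \<and> t + p \<le> b \<longrightarrow> S ! t = S ! (t + p))"
  proof (intro conjI allI impI)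
    show "p > 0" using per by (simp add: is_period_def)
    fix t assume t: "a \<le> t \<and> t + p \<le> b"
    then have "frag S a b ! (t - a) = frag S a b ! (t - a + p)"
      using per assms by (auto simp: is_period_def length_frag)
    moreover have "frag S a b ! (t - a) = S ! t" "frag S a b ! (t - a + p) = S ! (t + p)"
      using t assms \<open>p > 0\<close> by (subst nth_frag; auto)+
    ultimately show "S ! t = S ! (t + p)" by simp
  qed
next
  assume "p > 0 \<and> (\<forall>t. a \<le> t \<and> t + p \<le> b \<longrightarrow> S ! t = S ! (t + p))"
  with assms show "is_period (frag S a b) p"
    by (auto simp: is_period_def length_frag nth_frag add.assoc)
qed

lemma is_period_per: "is_period P (per P)"
proof -
  have "is_period P (Suc (length P))" by (simp add: is_period_def)
  then show ?thesis unfolding per_def by (rule LeastI)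
qed

lemma per_le: "is_period P q \<Longrightarrow> per P \<le> q"
  unfolding per_def by (rule Least_le)

lemma is_period_frag_mono:
  assumes "b < length S" "a \<le> c" "d \<le> b" "is_period (frag S a b) p"
  shows "is_period (frag S c d) p"
  using assms by (auto simp: is_period_frag_iff)

lemma is_period_frag_extend_left:
  assumes "d < length S" "is_period (frag S c d) p" "S ! (c - 1) = S ! (c - 1 + p)"
  shows "is_period (frag S (c - 1) d) p"
  unfolding is_period_frag_iff[OF \<open>d < length S\<close>]
proof (intro conjI allI impI)
  show "p > 0" using assms(2) by (simp add: is_period_def)
  fix t assume t: "c - 1 \<le> t \<and> t + p \<le> d"
  show "S ! t = S ! (t + p)"
  proof (cases "t = c - 1")
    case True
    with assms(3) show ?thesis by simp
  next
    case False
    with t assms(1,2) show ?thesis by (auto simp: is_period_frag_iff)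
  qed
qed

lemma run_left_mismatch:
  assumes run: "is_run S c d" and "0 < c"
  shows "S ! (c - 1) \<noteq> S ! (c - 1 + per (frag S c d))"
proof
  let ?p = "per (frag S c d)"
  assume "S ! (c - 1) = S ! (c - 1 + ?p)"
  have d: "d < length S" using run by (simp add: is_run_def)
  have "per (frag S (c - 1) d) \<le> ?p"
    using is_period_frag_extend_left[OF d is_period_per] \<open>S ! (c - 1) = _\<close> per_le by blast
  moreover have "is_period (frag S c d) (per (frag S (c - 1) d))"
    using is_period_frag_mono[OF d _ _ is_period_per] by simp
  then have "?p \<le> per (frag S (c - 1) d)"
    by (rule per_le)
  moreover have "per (frag S (c - 1) d) \<noteq> ?p"
    using run \<open>0 < c\<close> by (simp add: is_run_def)
  ultimately show False by simp
qed

lemma run_no_left_overlap: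
  assumes run: "is_run S c d" and "a < c" and "b < length S"
    and period: "is_period (frag S a b) (per (frag S c d))"
    and overlap: "c + per (frag S c d) \<le> Suc b"
  shows False
proof -
  have "a \<le> c - 1 \<and> c - 1 + per (frag S c d) \<le> b"
    using overlap \<open>a < c\<close> by arith
  then have "S ! (c - 1) = S ! (c - 1 + per (frag S c d))"
    using period unfolding is_period_frag_iff[OF \<open>b < length S\<close>] by blast
  with run_left_mismatch[OF run] \<open>a < c\<close> show False by simp
qed

theorem lemma2:
  fixes S :: "'a list" and i i' j j' k k' :: nat
  assumes "i < j" and "j < k"
    and "is_run S i i'" and "is_run S j j'" and "is_run S k k'"
    and "per (frag S i i') = per (frag S j j')"
    and "per (frag S j j') = per (frag S k k')"
  shows "k > i'"
proof (rule ccontr)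
  assume "\<not> k > i'"
  let ?p = "per (frag S j j')"
  have "i' < length S" "j' < length S" "j \<le> j'" and long: "2 * ?p \<le> Suc j' - j"
    using assms(3,4) by (auto simp: is_run_def length_frag)
  show False
  proof (cases "j + ?p \<le> Suc i'")
    case True
    with assms(6) show False
      using run_no_left_overlap[OF assms(4,1) \<open>i' < length S\<close>] is_period_per by metis
  next
    case False
    with \<open>\<not> k > i'\<close> long \<open>j \<le> j'\<close> have "k + ?p \<le> Suc j'" by arith
    with assms(7) show False
      using run_no_left_overlap[OF assms(5,2) \<open>j' < length S\<close>] is_period_per by metis
  qed
qed

end
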